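(* Let $\Omega\subset\mathbb{R}^2$ be a bounded domain with area $S_\Omega$, and let $\lambda>0$, $\beta>0$, $\eta>0$. Let $$\mathcal{X}=\mathcal{W}^{1,\infty}_\eta=\{\mu\in W^{1,\infty}(\Omega)\ :\ \|\nabla\mu\|_{L^\infty}<\eta\},$$ equipped with the norm $\|\mu\|_{\mathcal{X}}^2=\int_\Omega\big(|\partial_1\mu|^2+|\partial_2\mu|^2+|\mu|^2\big)\,dx_1dx_2$. Define $\mathrm{R}:\mathcal{X}\to\mathbb{R}$ by $$\mathrm{R}(\mu)=\lambda\int_\Omega\Big(\big|p_1(\mu)\,\partial_1\mu\big|+\big|p_2(\mu)\,\partial_2\mu\big|\Big)\,dx_1dx_2,\qquad p_i(\mu)=\frac{1}{|\partial_i\mu|^2+\beta},\ i=1,2.$$ Then: (1) $\mathrm{R}$ is bounded from below on $\mathcal{X}$ (indeed $\mathrm{R}(\mu)\ge 0$ for all $\mu\in\mathcal{X}$); (2) for every $\delta>0$ there exists $M=M(\delta)>0$ such that $\mathrm{R}(\mu)\le M$ for all $\mu\in\mathcal{X}$ with $\|\mu\|_{\mathcal{X}}\le\delta$; (3) for every $\delta>0$ there exists $L=L(\delta)>0$ such that $|\mathrm{R}(\mu_1)-\mathrm{R}(\mu_2)|\le L\|\mu_1-\mu_2\|_{\mathcal{X}}$ for all $\mu_1,\mu_2\in\mathcal{X}$ with $\max\{\|\mu_1\|_{\mathcal{X}},\|\mu_2\|_{\mathcal{X}}\}\le\delta$.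
   Context: $\partial_1,\partial_2$ denote the first-order (weak) partial derivatives in the $x_1$ and $x_2$ directions and $\nabla=(\partial_1,\partial_2)$. The functional $\mathrm{R}$ is the nonlinear weighted anisotropic total variation with weights $p=(p_1(\mu),p_2(\mu))$ depending on $\mu$ itself. *)

theory Defs
  imports "HOL-Analysis.Analysis"
begin

type_synonym pt = "real \<times> real"

definition pd1 :: "(pt \<Rightarrow> real) \<Rightarrow> pt \<Rightarrow> real" where
  "pd1 f x = frechet_derivative f (at x) (1, 0)"

definition pd2 :: "(pt \<Rightarrow> real) \<Rightarrow> pt \<Rightarrow> real" where
  "pd2 f x = frechet_derivative f (at x) (0, 1)"

text \<open>C-infinity functions on R^2: differentiable everywhere, with all partial
  derivatives again C-infinity (greatest fixed point).\<close>
coinductive smooth2 :: "(pt \<Rightarrow> real) \<Rightarrow> bool" where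
  "(\<forall>x. f differentiable (at x)) \<Longrightarrow> smooth2 (pd1 f) \<Longrightarrow> smooth2 (pd2 f) \<Longrightarrow> smooth2 f"

definition test_fun :: "pt set \<Rightarrow> (pt \<Rightarrow> real) \<Rightarrow> bool" where
  "test_fun \<Omega> \<phi> \<longleftrightarrow> smooth2 \<phi> \<and> compact (closure {x. \<phi> x \<noteq> 0})
      \<and> closure {x. \<phi> x \<noteq> 0} \<subseteq> \<Omega>"

definition Linf :: "pt set \<Rightarrow> (pt \<Rightarrow> real) \<Rightarrow> bool" where
  "Linf \<Omega> f \<longleftrightarrow> f \<in> borel_measurable (lebesgue_on \<Omega>)
      \<and> (\<exists>C. AE x in lebesgue_on \<Omega>. \<bar>f x\<bar> \<le> C)"

definition weak_pd1 :: "pt set \<Rightarrow> (pt \<Rightarrow> real) \<Rightarrow> (pt \<Rightarrow> real) \<Rightarrow> bool" where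
  "weak_pd1 \<Omega> u g \<longleftrightarrow> (\<forall>\<phi>. test_fun \<Omega> \<phi> \<longrightarrow>
      (\<integral>x. u x * pd1 \<phi> x \<partial>lebesgue_on \<Omega>) = - (\<integral>x. g x * \<phi> x \<partial>lebesgue_on \<Omega>))"

definition weak_pd2 :: "pt set \<Rightarrow> (pt \<Rightarrow> real) \<Rightarrow> (pt \<Rightarrow> real) \<Rightarrow> bool" where
  "weak_pd2 \<Omega> u g \<longleftrightarrow> (\<forall>\<phi>. test_fun \<Omega> \<phi> \<longrightarrow>
      (\<integral>x. u x * pd2 \<phi> x \<partial>lebesgue_on \<Omega>) = - (\<integral>x. g x * \<phi> x \<partial>lebesgue_on \<Omega>))"

definition in_W1inf_eta :: "pt set \<Rightarrow> real \<Rightarrow> (pt \<Rightarrow> real) \<Rightarrow> (pt \<Rightarrow> real) \<Rightarrow> (pt \<Rightarrow> real) \<Rightarrow> bool" where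
  "in_W1inf_eta \<Omega> \<eta> u g1 g2 \<longleftrightarrow> Linf \<Omega> u \<and> Linf \<Omega> g1 \<and> Linf \<Omega> g2
      \<and> weak_pd1 \<Omega> u g1 \<and> weak_pd2 \<Omega> u g2
      \<and> (\<exists>c<\<eta>. AE x in lebesgue_on \<Omega>. sqrt ((g1 x)\<^sup>2 + (g2 x)\<^sup>2) \<le> c)"

definition normX :: "pt set \<Rightarrow> (pt \<Rightarrow> real) \<Rightarrow> (pt \<Rightarrow> real) \<Rightarrow> (pt \<Rightarrow> real) \<Rightarrow> real" where
  "normX \<Omega> u g1 g2 = sqrt (\<integral>x. (g1 x)\<^sup>2 + (g2 x)\<^sup>2 + (u x)\<^sup>2 \<partial>lebesgue_on \<Omega>)"

definition Rfun :: "pt set \<Rightarrow> real \<Rightarrow> real \<Rightarrow> (pt \<Rightarrow> real) \<Rightarrow> (pt \<Rightarrow> real) \<Rightarrow> real" where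
  "Rfun \<Omega> lam \<beta> g1 g2 = lam * (\<integral>x. \<bar>(1 / (\<bar>g1 x\<bar>\<^sup>2 + \<beta>)) * g1 x\<bar>
                                   + \<bar>(1 / (\<bar>g2 x\<bar>\<^sup>2 + \<beta>)) * g2 x\<bar> \<partial>lebesgue_on \<Omega>)"

end

theory Submission
  imports Defs
begin

text \<open>Both weighted terms of \<open>R\<close> are the scalar map \<open>w(t) = |t| / (t\<^sup>2 + \<beta>)\<close>
  applied to a partial derivative. Since \<open>(|t| - \<surd>\<beta>)\<^sup>2 \<ge> 0\<close>, \<open>w \<le> 1 / (2\<surd>\<beta>)\<close>,
  and \<open>w\<close> is Lipschitz with constant \<open>1/\<beta>\<close>. Hence \<open>R\<close> is nonnegative and bounded
  by \<open>\<lambda> |\<Omega>| / \<surd>\<beta>\<close> on all of \<open>X\<close>, while \<open>|R(\<mu>\<^sub>1) - R(\<mu>\<^sub>2)|\<close> is at most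
  \<open>\<lambda>/\<beta>\<close> times the \<open>L\<^sup>1\<close> norm of the gradient difference, which the Cauchy-Schwarz
  inequality on the finite-measure set \<open>\<Omega>\<close> bounds by \<open>\<surd>(2|\<Omega>|)\<close> times the \<open>X\<close>-norm.
  The constants are uniform.\<close>

definition tv_weight :: "real \<Rightarrow> real \<Rightarrow> real" where
  "tv_weight b t = \<bar>(1 / (\<bar>t\<bar>\<^sup>2 + b)) * t\<bar>"

lemma Rfun_eq_integral_tv_weight:
  "Rfun \<Omega> lam \<beta> g1 g2 = lam * (\<integral>x. tv_weight \<beta> (g1 x) + tv_weight \<beta> (g2 x) \<partial>lebesgue_on \<Omega>)"
  by (simp add: Rfun_def tv_weight_def)

lemma tv_weight_nonneg: "0 \<le> tv_weight b t"
  by (simp add: tv_weight_def)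

lemma tv_weight_eq: "b > 0 \<Longrightarrow> tv_weight b t = \<bar>t\<bar> / (t\<^sup>2 + b)"
  by (simp add: tv_weight_def abs_mult add_nonneg_pos)

lemma tv_weight_le:
  assumes "b > 0" shows "tv_weight b t \<le> 1 / (2 * sqrt b)"
proof -
  have "0 \<le> (\<bar>t\<bar> - sqrt b)\<^sup>2" by simp
  then have "2 * \<bar>t\<bar> * sqrt b \<le> t\<^sup>2 + b"
    using assms by (simp add: power2_diff)
  then show ?thesis
    using assms by (simp add: tv_weight_eq divide_simps add_nonneg_pos mult_ac)
qed

lemma tv_weight_lipschitz:
  assumes "b > 0" shows "\<bar>tv_weight b s - tv_weight b t\<bar> \<le> \<bar>s - t\<bar> / b"
proof -
  have nonneg_case: "\<bar>x / (x\<^sup>2 + b) - y / (y\<^sup>2 + b)\<bar> \<le> \<bar>x - y\<bar> / b"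
    if "x \<ge> 0" "y \<ge> 0" for x y
  proof -
    have denom_pos: "x\<^sup>2 + b > 0" "y\<^sup>2 + b > 0"
      using assms by (simp_all add: add_nonneg_pos)
    have "\<bar>b - x * y\<bar> * b \<le> (x\<^sup>2 + b) * (y\<^sup>2 + b)"
    proof (cases "x * y \<le> b")
      case True
      have "\<bar>b - x * y\<bar> * b \<le> b * b"
        using True that assms by (intro mult_right_mono) auto
      also have "\<dots> \<le> (x\<^sup>2 + b) * (y\<^sup>2 + b)"
        using assms by (intro mult_mono) auto
      finally show ?thesis .
    next
      case False
      have "x * y \<le> x\<^sup>2 + y\<^sup>2"
        using sum_squares_bound[of x y] that mult_nonneg_nonneg[of x y] by linarith
      then have "\<bar>b - x * y\<bar> * b \<le> (x\<^sup>2 + y\<^sup>2) * b"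
        using False assms by (intro mult_right_mono) auto
      also have "\<dots> \<le> (x\<^sup>2 + b) * (y\<^sup>2 + b)"
        using zero_le_square[of "x * y"] zero_le_square[of b]
        by (simp add: algebra_simps power2_eq_square)
      finally show ?thesis .
    qed
    moreover have "x / (x\<^sup>2 + b) - y / (y\<^sup>2 + b) = (x - y) * (b - x * y) / ((x\<^sup>2 + b) * (y\<^sup>2 + b))"
      using denom_pos by (simp add: field_simps) (simp add: algebra_simps power2_eq_square)
    ultimately show ?thesis
      using assms denom_pos by (simp add: abs_mult divide_simps mult_left_mono mult.assoc)
  qed
  have "\<bar>tv_weight b s - tv_weight b t\<bar> \<le> \<bar>\<bar>s\<bar> - \<bar>t\<bar>\<bar> / b"
    using nonneg_case[of "\<bar>s\<bar>" "\<bar>t\<bar>"] assms by (simp add: tv_weight_eq)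
  also have "\<dots> \<le> \<bar>s - t\<bar> / b"
    using assms by (simp add: divide_right_mono abs_triangle_ineq3)
  finally show ?thesis .
qed

lemma (in finite_measure) integral_le_sqrt_measure_times_integral:
  fixes a b :: "'a \<Rightarrow> real"
  assumes a: "integrable M a" and b: "integrable M b"
    and a_sq_le_b: "\<And>x. x \<in> space M \<Longrightarrow> (a x)\<^sup>2 \<le> b x"
  shows "integral\<^sup>L M a \<le> sqrt (measure M (space M) * integral\<^sup>L M b)"
proof (cases "measure M (space M) = 0")
  case True
  then have "integral\<^sup>L M a = 0"
    by (intro integral_eq_zero_AE emeasure_0_AE) (simp add: emeasure_eq_measure)
  then show ?thesis
    using True by simp
next
  case False
  define m where "m = measure M (space M)"
  define I where "I = integral\<^sup>L M a"
  define B where "B = integral\<^sup>L M b"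
  have "m > 0"
    using False by (simp add: m_def zero_less_measure_iff)
  have "0 \<le> (\<integral>x. m\<^sup>2 * b x - 2 * m * I * a x + I\<^sup>2 \<partial>M)"
  proof (intro integral_nonneg_AE AE_I2 impI)
    fix x assume "x \<in> space M"
    have "0 \<le> (m * a x - I)\<^sup>2" by simp
    also have "\<dots> \<le> m\<^sup>2 * b x - 2 * m * I * a x + I\<^sup>2"
      using a_sq_le_b[OF \<open>x \<in> space M\<close>]
      by (simp add: power2_diff power_mult_distrib mult_left_mono)
    finally show "0 \<le> m\<^sup>2 * b x - 2 * m * I * a x + I\<^sup>2" .
  qed
  also have "\<dots> = m * (m * B - I\<^sup>2)"
    using a b by (simp add: I_def B_def m_def power2_eq_square algebra_simps)
  finally have "I\<^sup>2 \<le> m * B"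
    using \<open>m > 0\<close> by (simp add: zero_le_mult_iff)
  then have "I \<le> sqrt (m * B)"
    by (simp add: real_le_rsqrt)
  then show ?thesis
    by (simp add: I_def B_def m_def)
qed

lemma Linf_diff:
  assumes "Linf \<Omega> f" "Linf \<Omega> g"
  shows "Linf \<Omega> (\<lambda>x. f x - g x)"
proof -
  obtain C D where meas: "f \<in> borel_measurable (lebesgue_on \<Omega>)" "g \<in> borel_measurable (lebesgue_on \<Omega>)"
    and C: "AE x in lebesgue_on \<Omega>. \<bar>f x\<bar> \<le> C" and D: "AE x in lebesgue_on \<Omega>. \<bar>g x\<bar> \<le> D"
    using assms unfolding Linf_def by blast
  have "AE x in lebesgue_on \<Omega>. \<bar>f x - g x\<bar> \<le> C + D"
    using C D by eventually_elim auto
  moreover have "(\<lambda>x. f x - g x) \<in> borel_measurable (lebesgue_on \<Omega>)"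
    using meas by measurable
  ultimately show ?thesis
    unfolding Linf_def by blast
qed

lemma Linf_imp_integrable_power:
  assumes "Linf \<Omega> f" "\<Omega> \<in> lmeasurable"
  shows "integrable (lebesgue_on \<Omega>) (\<lambda>x. f x ^ n)"
proof -
  obtain C where "f \<in> borel_measurable (lebesgue_on \<Omega>)"
    and "AE x in lebesgue_on \<Omega>. \<bar>f x\<bar> \<le> C"
    using assms(1) unfolding Linf_def by blast
  then show ?thesis
    using finite_measure_lebesgue_on[OF assms(2)]
    by (intro finite_measure.integrable_const_bound[where B = "C ^ n"])
      (auto elim!: eventually_mono simp: power_abs power_mono)
qed

lemma integrable_tv_weight:
  assumes "f \<in> borel_measurable (lebesgue_on \<Omega>)" "\<Omega> \<in> lmeasurable" "\<beta> > 0"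
  shows "integrable (lebesgue_on \<Omega>) (\<lambda>x. tv_weight \<beta> (f x))"
  using finite_measure_lebesgue_on[OF assms(2)] assms(1) tv_weight_le[OF assms(3)]
  by (intro finite_measure.integrable_const_bound[where B = "1 / (2 * sqrt \<beta>)"])
    (auto simp: tv_weight_def tv_weight_nonneg[unfolded tv_weight_def])

lemma Rfun_nonneg: "lam \<ge> 0 \<Longrightarrow> 0 \<le> Rfun \<Omega> lam \<beta> g1 g2"
  unfolding Rfun_eq_integral_tv_weight
  by (intro mult_nonneg_nonneg integral_nonneg_AE AE_I2) (simp_all add: add_nonneg_nonneg tv_weight_nonneg)

text \<open>No hypothesis on \<open>g1, g2\<close> is needed: a non-integrable integrand has integral 0.\<close>

lemma Rfun_le:
  assumes "\<Omega> \<in> lmeasurable" "lam \<ge> 0" "\<beta> > 0"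
  shows "Rfun \<Omega> lam \<beta> g1 g2 \<le> lam * measure lebesgue \<Omega> / sqrt \<beta>"
proof -
  let ?F = "\<lambda>x. tv_weight \<beta> (g1 x) + tv_weight \<beta> (g2 x)"
  have F_le: "?F x \<le> 1 / sqrt \<beta>" for x
  proof -
    have "?F x \<le> 1 / (2 * sqrt \<beta>) + 1 / (2 * sqrt \<beta>)"
      using assms(3) by (intro add_mono tv_weight_le)
    then show ?thesis by simp
  qed
  have "integral\<^sup>L (lebesgue_on \<Omega>) ?F \<le> (\<integral>x. 1 / sqrt \<beta> \<partial>lebesgue_on \<Omega>)"
  proof (cases "integrable (lebesgue_on \<Omega>) ?F")
    case True
    show ?thesis
      using F_le finite_measure_lebesgue_on[OF assms(1)]
      by (intro integral_mono True finite_measure.integrable_const)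
  next
    case False
    then show ?thesis
      using assms by (simp add: not_integrable_integral_eq)
  qed
  also have "\<dots> = measure lebesgue \<Omega> / sqrt \<beta>"
    using assms(1) by (simp add: measure_restrict_space)
  finally show ?thesis
    unfolding Rfun_eq_integral_tv_weight times_divide_eq_right[symmetric]
    using assms(2) by (rule mult_left_mono)
qed

lemma integral_abs_le_normX:
  assumes "Linf \<Omega> u" "Linf \<Omega> g1" "Linf \<Omega> g2" "\<Omega> \<in> lmeasurable"
  shows "(\<integral>x. \<bar>g1 x\<bar> + \<bar>g2 x\<bar> \<partial>lebesgue_on \<Omega>) \<le> sqrt (2 * measure lebesgue \<Omega>) * normX \<Omega> u g1 g2"
proof -
  have int: "integrable (lebesgue_on \<Omega>) (\<lambda>x. f x ^ n)" if "Linf \<Omega> f" for f n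
    using that assms(4) by (rule Linf_imp_integrable_power)
  let ?Q = "\<lambda>x. (g1 x)\<^sup>2 + (g2 x)\<^sup>2 + (u x)\<^sup>2"
  have "(\<integral>x. \<bar>g1 x\<bar> + \<bar>g2 x\<bar> \<partial>lebesgue_on \<Omega>)
      \<le> sqrt (measure (lebesgue_on \<Omega>) (space (lebesgue_on \<Omega>)) * (\<integral>x. 2 * ?Q x \<partial>lebesgue_on \<Omega>))"
  proof (rule finite_measure.integral_le_sqrt_measure_times_integral)
    show "finite_measure (lebesgue_on \<Omega>)"
      using assms(4) by (rule finite_measure_lebesgue_on)
    show "integrable (lebesgue_on \<Omega>) (\<lambda>x. \<bar>g1 x\<bar> + \<bar>g2 x\<bar>)"
      using int[OF assms(2), of 1] int[OF assms(3), of 1] by simp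
    show "integrable (lebesgue_on \<Omega>) (\<lambda>x. 2 * ?Q x)"
      using int[OF assms(1), of 2] int[OF assms(2), of 2] int[OF assms(3), of 2] by simp
    fix x
    have "0 \<le> (\<bar>g1 x\<bar> - \<bar>g2 x\<bar>)\<^sup>2" by simp
    then have "(\<bar>g1 x\<bar> + \<bar>g2 x\<bar>)\<^sup>2 \<le> 2 * ((g1 x)\<^sup>2 + (g2 x)\<^sup>2)"
      by (simp add: power2_sum power2_diff)
    also have "\<dots> \<le> 2 * ?Q x"
      by simp
    finally show "(\<bar>g1 x\<bar> + \<bar>g2 x\<bar>)\<^sup>2 \<le> 2 * ?Q x" .
  qed
  also have "\<dots> = sqrt (2 * measure lebesgue \<Omega>) * normX \<Omega> u g1 g2"
    unfolding integral_mult_right_zero normX_def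
    using assms(4) by (simp add: measure_restrict_space real_sqrt_mult mult_ac)
  finally show ?thesis .
qed

lemma Rfun_diff_le_integral:
  assumes "Linf \<Omega> g1" "Linf \<Omega> g2" "Linf \<Omega> h1" "Linf \<Omega> h2"
    and "\<Omega> \<in> lmeasurable" "lam \<ge> 0" "\<beta> > 0"
  shows "\<bar>Rfun \<Omega> lam \<beta> g1 g2 - Rfun \<Omega> lam \<beta> h1 h2\<bar>
    \<le> lam / \<beta> * (\<integral>x. \<bar>g1 x - h1 x\<bar> + \<bar>g2 x - h2 x\<bar> \<partial>lebesgue_on \<Omega>)"
proof -
  let ?F = "\<lambda>f1 f2 x. tv_weight \<beta> (f1 x) + tv_weight \<beta> (f2 x)"
  have int_tv: "integrable (lebesgue_on \<Omega>) (\<lambda>x. tv_weight \<beta> (f x))" if "Linf \<Omega> f" for f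
    using that assms(5,7) unfolding Linf_def by (blast intro: integrable_tv_weight)
  have int_abs: "integrable (lebesgue_on \<Omega>) (\<lambda>x. \<bar>f x\<bar>)" if "Linf \<Omega> f" for f
    using Linf_imp_integrable_power[OF that assms(5), of 1] by simp
  have "\<bar>integral\<^sup>L (lebesgue_on \<Omega>) (?F g1 g2) - integral\<^sup>L (lebesgue_on \<Omega>) (?F h1 h2)\<bar>
      = \<bar>\<integral>x. ?F g1 g2 x - ?F h1 h2 x \<partial>lebesgue_on \<Omega>\<bar>"
    using assms(1-4) by (simp add: int_tv)
  also have "\<dots> \<le> (\<integral>x. (\<bar>g1 x - h1 x\<bar> + \<bar>g2 x - h2 x\<bar>) / \<beta> \<partial>lebesgue_on \<Omega>)"
  proof (rule integral_abs_bound_integral)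
    show "integrable (lebesgue_on \<Omega>) (\<lambda>x. ?F g1 g2 x - ?F h1 h2 x)"
      using assms(1-4) by (simp add: int_tv)
    show "integrable (lebesgue_on \<Omega>) (\<lambda>x. (\<bar>g1 x - h1 x\<bar> + \<bar>g2 x - h2 x\<bar>) / \<beta>)"
      using assms(1-4) by (simp add: int_abs Linf_diff)
    fix x
    show "\<bar>?F g1 g2 x - ?F h1 h2 x\<bar> \<le> (\<bar>g1 x - h1 x\<bar> + \<bar>g2 x - h2 x\<bar>) / \<beta>"
      using tv_weight_lipschitz[OF assms(7), of "g1 x" "h1 x"] tv_weight_lipschitz[OF assms(7), of "g2 x" "h2 x"]
      by (simp add: add_divide_distrib)
  qed
  also have "\<dots> = (\<integral>x. \<bar>g1 x - h1 x\<bar> + \<bar>g2 x - h2 x\<bar> \<partial>lebesgue_on \<Omega>) / \<beta>"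
    by simp
  finally show ?thesis
    using assms(6) mult_left_mono
    by (fastforce simp: Rfun_eq_integral_tv_weight abs_mult simp flip: right_diff_distrib)
qed

lemma Rfun_lipschitz:
  assumes "Linf \<Omega> u" "Linf \<Omega> g1" "Linf \<Omega> g2" "Linf \<Omega> v" "Linf \<Omega> h1" "Linf \<Omega> h2"
    and "\<Omega> \<in> lmeasurable" "lam \<ge> 0" "\<beta> > 0"
  shows "\<bar>Rfun \<Omega> lam \<beta> g1 g2 - Rfun \<Omega> lam \<beta> h1 h2\<bar>
    \<le> lam / \<beta> * sqrt (2 * measure lebesgue \<Omega>)
        * normX \<Omega> (\<lambda>x. u x - v x) (\<lambda>x. g1 x - h1 x) (\<lambda>x. g2 x - h2 x)"
proof -
  have "\<bar>Rfun \<Omega> lam \<beta> g1 g2 - Rfun \<Omega> lam \<beta> h1 h2\<bar>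
      \<le> lam / \<beta> * (\<integral>x. \<bar>g1 x - h1 x\<bar> + \<bar>g2 x - h2 x\<bar> \<partial>lebesgue_on \<Omega>)"
    using assms by (intro Rfun_diff_le_integral)
  also have "\<dots> \<le> lam / \<beta> * (sqrt (2 * measure lebesgue \<Omega>)
      * normX \<Omega> (\<lambda>x. u x - v x) (\<lambda>x. g1 x - h1 x) (\<lambda>x. g2 x - h2 x))"
    using assms by (intro mult_left_mono integral_abs_le_normX Linf_diff) auto
  finally show ?thesis
    by (simp add: mult.assoc)
qed

theorem lemma1:
  fixes \<Omega> :: "(real \<times> real) set" and lam \<beta> \<eta> :: real
  assumes "open \<Omega>" and "connected \<Omega>" and "\<Omega> \<noteq> {}" and "bounded \<Omega>"
    and "lam > 0" and "\<beta> > 0" and "\<eta> > 0"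
  shows "(\<forall>u g1 g2. in_W1inf_eta \<Omega> \<eta> u g1 g2 \<longrightarrow> Rfun \<Omega> lam \<beta> g1 g2 \<ge> 0)
    \<and> (\<forall>\<delta>>0. \<exists>M>0. \<forall>u g1 g2. in_W1inf_eta \<Omega> \<eta> u g1 g2 \<and> normX \<Omega> u g1 g2 \<le> \<delta>
           \<longrightarrow> Rfun \<Omega> lam \<beta> g1 g2 \<le> M)
    \<and> (\<forall>\<delta>>0. \<exists>L>0. \<forall>u g1 g2 v h1 h2.
           in_W1inf_eta \<Omega> \<eta> u g1 g2 \<and> in_W1inf_eta \<Omega> \<eta> v h1 h2
           \<and> max (normX \<Omega> u g1 g2) (normX \<Omega> v h1 h2) \<le> \<delta>
           \<longrightarrow> \<bar>Rfun \<Omega> lam \<beta> g1 g2 - Rfun \<Omega> lam \<beta> h1 h2\<bar>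
               \<le> L * normX \<Omega> (\<lambda>x. u x - v x) (\<lambda>x. g1 x - h1 x) (\<lambda>x. g2 x - h2 x))"
proof -
  have \<Omega>: "\<Omega> \<in> lmeasurable"
    using \<open>bounded \<Omega>\<close> \<open>open \<Omega>\<close> by (rule lmeasurable_open)
  define m where "m = measure lebesgue \<Omega>"
  define M where "M = lam * m / sqrt \<beta> + 1"
  define L where "L = lam / \<beta> * sqrt (2 * m) + 1"
  have "M > 0" "L > 0"
    using \<open>lam > 0\<close> \<open>\<beta> > 0\<close> by (simp_all add: M_def L_def m_def add_nonneg_pos)
  have Linf: "Linf \<Omega> u" "Linf \<Omega> g1" "Linf \<Omega> g2" if "in_W1inf_eta \<Omega> \<eta> u g1 g2" for u g1 g2
    using that by (simp_all add: in_W1inf_eta_def)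
  have R_le_M: "Rfun \<Omega> lam \<beta> g1 g2 \<le> M" for g1 g2
    using Rfun_le[OF \<Omega>, of lam \<beta> g1 g2] \<open>lam > 0\<close> \<open>\<beta> > 0\<close> by (simp add: M_def m_def)
  have R_lipschitz: "\<bar>Rfun \<Omega> lam \<beta> g1 g2 - Rfun \<Omega> lam \<beta> h1 h2\<bar>
      \<le> L * normX \<Omega> (\<lambda>x. u x - v x) (\<lambda>x. g1 x - h1 x) (\<lambda>x. g2 x - h2 x)"
    if "in_W1inf_eta \<Omega> \<eta> u g1 g2" "in_W1inf_eta \<Omega> \<eta> v h1 h2" for u g1 g2 v h1 h2
  proof -
    have "\<bar>Rfun \<Omega> lam \<beta> g1 g2 - Rfun \<Omega> lam \<beta> h1 h2\<bar>
        \<le> (L - 1) * normX \<Omega> (\<lambda>x. u x - v x) (\<lambda>x. g1 x - h1 x) (\<lambda>x. g2 x - h2 x)"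
      using Rfun_lipschitz[OF Linf[OF that(1)] Linf[OF that(2)] \<Omega>] \<open>lam > 0\<close> \<open>\<beta> > 0\<close>
      by (simp add: L_def m_def)
    also have "\<dots> \<le> L * normX \<Omega> (\<lambda>x. u x - v x) (\<lambda>x. g1 x - h1 x) (\<lambda>x. g2 x - h2 x)"
      by (intro mult_right_mono) (simp_all add: normX_def)
    finally show ?thesis .
  qed
  show ?thesis
    using Rfun_nonneg[of lam] \<open>lam > 0\<close> R_le_M R_lipschitz \<open>M > 0\<close> \<open>L > 0\<close> by auto
qed

end
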